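(* Let $1\le r<N$, $r\le m$, and assume $\widehat\lambda_r>0$. Write $\epsilon=\|L_N-L_m\|_{HS}$ and suppose $$\Delta:=\frac{\lambda_r-\lambda_{r+1}}{N}>3\epsilon.$$ Then $$\|\Delta H\|_2\le\frac{4\epsilon}{\Delta-\epsilon}\le\frac{6\epsilon}{\Delta}.$$
   Context: Let $\mathcal X$ be a set and $\kappa:\mathcal X\times\mathcal X\to\mathbb R$ a positive semidefinite kernel with $\kappa(\mathbf x,\mathbf x)\le1$. Let $\mathcal H_\kappa$ be its RKHS, with inner product $\langle\cdot,\cdot\rangle$. Let $\mathcal D=\{\mathbf x_1,\ldots,\mathbf x_N\}$ and $K=[\kappa(\mathbf x_i,\mathbf x_j)]_{N\times N}$. Assume $K$ is positive definite, with eigenvalues $\lambda_1\ge\cdots\ge\lambda_N>0$ and orthonormal eigenvectors $\mathbf v_i$. Put $V_{i,j}=[(\mathbf v_1,\ldots,\mathbf v_N)]_{i,j}$. Let $\widehat{\mathbf x}_1,\ldots,\widehat{\mathbf x}_m$ be sampled uniformly from $\mathcal D$. Let $\widehat K=[\kappa(\widehat{\mathbf x}_i,\widehat{\mathbf x}_j)]_{m\times m}$, with eigenvalues $\widehat\lambda_1\ge\cdots\ge\widehat\lambda_m$ and orthonormal eigenvectors $\mathbf u_i$. Put $U_{i,j}=[(\mathbf u_1,\ldots,\mathbf u_r)]_{i,j}$. Define the operators $$L_N[f]=\frac1N\sum_{i=1}^N\kappa(\mathbf x_i,\cdot)f(\mathbf x_i),\qquad L_m[f]=\frac1m\sum_{i=1}^m\kappa(\widehat{\mathbf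 x}_i,\cdot)f(\widehat{\mathbf x}_i).$$ Define $$\varphi_j=\lambda_j^{-1/2}\sum_{i=1}^N V_{i,j}\kappa(\mathbf x_i,\cdot)\quad(j\in[N]),\qquad \widehat\varphi_j=\widehat\lambda_j^{-1/2}\sum_{i=1}^m U_{i,j}\kappa(\widehat{\mathbf x}_i,\cdot)\quad(j\le r).$$ Define $\|L\|_{HS}=\big(\sum_{i,j=1}^N\langle\varphi_i,L\varphi_j\rangle^2\big)^{1/2}$. Define $H_r[f]=\sum_{i=1}^r\varphi_i\langle\varphi_i,f\rangle$, $\widehat H_r[f]=\sum_{i=1}^r\widehat\varphi_i\langle\widehat\varphi_i,f\rangle$, and $\Delta H=H_r-\widehat H_r$. Here $\|\cdot\|_2$ is the operator norm on $\mathcal H_\kappa$. *)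

theory Defs
  imports "HOL-Analysis.Analysis"
begin

text \<open>The RKHS is modelled by a real Hilbert space 'h together with a feature map
  Phi with dense span; a function f in the RKHS corresponds to h with f(x) = Phi x \<bullet> h,
  and kappa(x,.) corresponds to Phi x.  Points are indexed 1..n.\<close>

definition emp_op :: "('x \<Rightarrow> 'h::real_inner) \<Rightarrow> nat \<Rightarrow> (nat \<Rightarrow> 'x) \<Rightarrow> 'h \<Rightarrow> 'h" where
  "emp_op Phi n p h = (1 / real n) *\<^sub>R (\<Sum>i=1..n. (Phi (p i) \<bullet> h) *\<^sub>R Phi (p i))"

definition eigen_decomp :: "nat \<Rightarrow> (nat \<Rightarrow> nat \<Rightarrow> real) \<Rightarrow> (nat \<Rightarrow> real) \<Rightarrow> (nat \<Rightarrow> nat \<Rightarrow> real) \<Rightarrow> bool" where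
  "eigen_decomp n M lam W \<longleftrightarrow>
     (\<forall>j\<in>{1..n}. \<forall>l\<in>{1..n}. (\<Sum>i=1..n. W i j * W i l) = (if j = l then 1 else 0)) \<and>
     (\<forall>j\<in>{1..n}. \<forall>i\<in>{1..n}. (\<Sum>k=1..n. M i k * W k j) = lam j * W i j) \<and>
     (\<forall>i j. 1 \<le> i \<longrightarrow> i \<le> j \<longrightarrow> j \<le> n \<longrightarrow> lam j \<le> lam i)"

definition eigfun :: "('x \<Rightarrow> 'h::real_inner) \<Rightarrow> nat \<Rightarrow> (nat \<Rightarrow> 'x) \<Rightarrow> (nat \<Rightarrow> real) \<Rightarrow> (nat \<Rightarrow> nat \<Rightarrow> real) \<Rightarrow> nat \<Rightarrow> 'h" where
  "eigfun Phi n p lam W j = (1 / sqrt (lam j)) *\<^sub>R (\<Sum>i=1..n. W i j *\<^sub>R Phi (p i))"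

definition proj_op :: "(nat \<Rightarrow> 'h::real_inner) \<Rightarrow> nat \<Rightarrow> 'h \<Rightarrow> 'h" where
  "proj_op phi r h = (\<Sum>i=1..r. (phi i \<bullet> h) *\<^sub>R phi i)"

definition hs_norm :: "(nat \<Rightarrow> 'h::real_inner) \<Rightarrow> nat \<Rightarrow> ('h \<Rightarrow> 'h) \<Rightarrow> real" where
  "hs_norm phi n L = sqrt (\<Sum>i=1..n. \<Sum>j=1..n. (phi i \<bullet> L (phi j))\<^sup>2)"

end

theory Submission
  imports Defs
begin

text \<open>
  Proof idea (a Davis--Kahan type argument via traces).  Write P and Q for the projections
  onto the span of the top r eigenfunctions of L_N and of L_m, and measure their distance
  by the misalignment  s = r - sum_{i,j<=r} <phi_i, hat phi_j>^2,  which equals both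
  sum_i ||phi_i - Q phi_i||^2 and sum_j ||hat phi_j - P hat phi_j||^2.
  (1) ||P - Q|| <= 2 sqrt s, since P - Q = P(I - Q) - (I - P)Q.
  (2) With E = L_N - L_m, a Ky Fan bound for L_m and the eigengap of L_N give
        Delta * s <= tr(P E P) - tr(Q E Q),
      while Cauchy--Schwarz gives  tr(P E P) - tr(Q E Q) <= 2 eps sqrt s,
      because both sum_i ||E phi_i||^2 and sum_j ||E hat phi_j||^2 are at most ||E||_HS^2.
  Hence sqrt s <= 2 eps / Delta and ||P - Q|| <= 4 eps / Delta <= 4 eps / (Delta - eps).
\<close>

section \<open>Finite orthonormal families\<close>

definition ON :: "(nat \<Rightarrow> 'h::real_inner) \<Rightarrow> nat set \<Rightarrow> bool" where
  "ON e I \<longleftrightarrow> (\<forall>i\<in>I. \<forall>j\<in>I. e i \<bullet> e j = (if i = j then 1 else 0))"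

lemma ON_subset: "ON e I \<Longrightarrow> J \<subseteq> I \<Longrightarrow> ON e J"
  unfolding ON_def by blast

lemma ON_norm: "ON e I \<Longrightarrow> i \<in> I \<Longrightarrow> norm (e i) = 1"
  unfolding ON_def by (simp add: norm_eq_sqrt_inner)

lemma ON_inner_sums:
  assumes "ON e I" "finite I"
  shows "(\<Sum>i\<in>I. c i *\<^sub>R e i) \<bullet> (\<Sum>j\<in>I. d j *\<^sub>R e j) = (\<Sum>i\<in>I. c i * d i)"
proof -
  have "(\<Sum>i\<in>I. c i *\<^sub>R e i) \<bullet> (\<Sum>j\<in>I. d j *\<^sub>R e j) = (\<Sum>i\<in>I. \<Sum>j\<in>I. c i * d j * (e i \<bullet> e j))"
    unfolding inner_sum_left by (simp add: inner_sum_right sum_distrib_left mult_ac)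
  also have "\<dots> = (\<Sum>i\<in>I. \<Sum>j\<in>I. if i = j then c i * d i else 0)"
    using assms(1) unfolding ON_def by (intro sum.cong refl) auto
  also have "\<dots> = (\<Sum>i\<in>I. c i * d i)" using assms(2) by simp
  finally show ?thesis .
qed

lemma ON_norm_sum:
  assumes "ON e I" "finite I"
  shows "(norm (\<Sum>i\<in>I. c i *\<^sub>R e i))\<^sup>2 = (\<Sum>i\<in>I. (c i)\<^sup>2)"
  unfolding power2_norm_eq_inner using ON_inner_sums[OF assms, of c c] by (simp add: power2_eq_square)

lemma ON_pyth:
  assumes "ON e I" "finite I"
  shows "(norm (h - (\<Sum>i\<in>I. (e i \<bullet> h) *\<^sub>R e i)))\<^sup>2 = (norm h)\<^sup>2 - (\<Sum>i\<in>I. (e i \<bullet> h)\<^sup>2)"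
proof -
  let ?S = "\<Sum>i\<in>I. (e i \<bullet> h) *\<^sub>R e i"
  have SS: "?S \<bullet> ?S = (\<Sum>i\<in>I. (e i \<bullet> h)\<^sup>2)"
    using ON_inner_sums[OF assms, of "\<lambda>i. e i \<bullet> h" "\<lambda>i. e i \<bullet> h"] by (simp add: power2_eq_square)
  have Sh: "?S \<bullet> h = (\<Sum>i\<in>I. (e i \<bullet> h)\<^sup>2)"
    by (simp add: inner_sum_left power2_eq_square)
  have "(norm (h - ?S))\<^sup>2 = h \<bullet> h - 2 * (?S \<bullet> h) + ?S \<bullet> ?S"
    by (simp add: power2_norm_eq_inner inner_diff_left inner_diff_right inner_commute)
  thus ?thesis using SS Sh by (simp add: power2_norm_eq_inner)
qed

lemma ON_bessel:
  assumes "ON e I" "finite I"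
  shows "(\<Sum>i\<in>I. (e i \<bullet> h)\<^sup>2) \<le> (norm h)\<^sup>2"
  using ON_pyth[OF assms, of h] by (metis diff_ge_0_iff_ge zero_le_power2)

lemma ON_expansion:
  assumes "ON e I" "finite I" "u \<in> span (e ` I)"
  shows "u = (\<Sum>i\<in>I. (e i \<bullet> u) *\<^sub>R e i)"
proof -
  have "subspace {u. u = (\<Sum>i\<in>I. (e i \<bullet> u) *\<^sub>R e i)}"
    unfolding subspace_def
  proof (intro conjI ballI allI; simp only: mem_Collect_eq)
    fix x y assume "x = (\<Sum>i\<in>I. (e i \<bullet> x) *\<^sub>R e i)" "y = (\<Sum>i\<in>I. (e i \<bullet> y) *\<^sub>R e i)"
    thus "x + y = (\<Sum>i\<in>I. (e i \<bullet> (x + y)) *\<^sub>R e i)"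
      by (simp add: inner_add_right scaleR_add_left sum.distrib)
  next
    fix c x assume x: "x = (\<Sum>i\<in>I. (e i \<bullet> x) *\<^sub>R e i)"
    have "(\<Sum>i\<in>I. (e i \<bullet> (c *\<^sub>R x)) *\<^sub>R e i) = c *\<^sub>R (\<Sum>i\<in>I. (e i \<bullet> x) *\<^sub>R e i)"
      by (simp add: scaleR_sum_right)
    thus "c *\<^sub>R x = (\<Sum>i\<in>I. (e i \<bullet> (c *\<^sub>R x)) *\<^sub>R e i)" using x by simp
  qed simp
  moreover have "e j = (\<Sum>i\<in>I. (e i \<bullet> e j) *\<^sub>R e i)" if j: "j \<in> I" for j
  proof -
    have "(\<Sum>i\<in>I. (e i \<bullet> e j) *\<^sub>R e i) = (\<Sum>i\<in>I. if i = j then e i else 0)"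
      using assms(1) j unfolding ON_def by (intro sum.cong) auto
    also have "\<dots> = e j" using assms(2) j by simp
    finally show ?thesis by simp
  qed
  ultimately show ?thesis using span_induct[OF assms(3)] by blast
qed

lemma ON_parseval:
  assumes "ON e I" "finite I" "u \<in> span (e ` I)"
  shows "(norm u)\<^sup>2 = (\<Sum>i\<in>I. (e i \<bullet> u)\<^sup>2)"
  using ON_norm_sum[OF assms(1,2), of "\<lambda>i. e i \<bullet> u"] ON_expansion[OF assms] by simp

lemma ON_rayleigh:
  assumes "ON e I" "finite I" "j \<in> I"
    and quad: "\<And>h. h \<bullet> A h = (\<Sum>k\<in>I. \<alpha> k * (e k \<bullet> h)\<^sup>2)"
  shows "e j \<bullet> A (e j) = \<alpha> j"
proof -
  have "e j \<bullet> A (e j) = (\<Sum>k\<in>I. if k = j then \<alpha> k else 0)"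
    unfolding quad using assms(1,3) unfolding ON_def by (intro sum.cong refl) auto
  thus ?thesis using assms(2,3) by simp
qed


section \<open>Projections onto orthonormal families and their misalignment\<close>

lemma sum_mult_le_sqrt:
  fixes a b :: "'a \<Rightarrow> real"
  shows "(\<Sum>i\<in>I. a i * b i) \<le> sqrt (\<Sum>i\<in>I. (a i)\<^sup>2) * sqrt (\<Sum>i\<in>I. (b i)\<^sup>2)"
proof -
  have "(\<Sum>i\<in>I. a i * b i) \<le> sqrt ((\<Sum>i\<in>I. a i * b i)\<^sup>2)" by simp
  also have "\<dots> \<le> sqrt ((\<Sum>i\<in>I. (a i)\<^sup>2) * (\<Sum>i\<in>I. (b i)\<^sup>2))"
    by (rule real_sqrt_le_mono[OF Cauchy_Schwarz_ineq_sum])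
  finally show ?thesis by (simp add: real_sqrt_mult)
qed

lemma sum_inner_le_sqrt:
  "(\<Sum>i\<in>I. u i \<bullet> v i) \<le> sqrt (\<Sum>i\<in>I. (norm (u i))\<^sup>2) * sqrt (\<Sum>i\<in>I. (norm (v i))\<^sup>2)"
proof -
  have "(\<Sum>i\<in>I. u i \<bullet> v i) \<le> (\<Sum>i\<in>I. norm (u i) * norm (v i))"
    by (intro sum_mono) (metis Cauchy_Schwarz_ineq2 abs_le_D1)
  also have "\<dots> \<le> sqrt (\<Sum>i\<in>I. (norm (u i))\<^sup>2) * sqrt (\<Sum>i\<in>I. (norm (v i))\<^sup>2)"
    by (rule sum_mult_le_sqrt[of "\<lambda>i. norm (u i)" "\<lambda>i. norm (v i)"])
  finally show ?thesis .
qed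

lemma proj_op_linear: "linear (proj_op e r)"
proof (rule linearI)
  fix a b show "proj_op e r (a + b) = proj_op e r a + proj_op e r b"
    unfolding proj_op_def by (simp add: inner_add_right scaleR_add_left sum.distrib)
next
  fix c a show "proj_op e r (c *\<^sub>R a) = c *\<^sub>R proj_op e r a"
    unfolding proj_op_def by (simp add: scaleR_sum_right)
qed

lemma proj_op_sym: "u \<bullet> proj_op e r h = proj_op e r u \<bullet> h"
  unfolding proj_op_def by (simp add: inner_sum_left inner_sum_right mult.commute inner_commute)

text \<open>The misalignment of two r-element orthonormal families: zero iff they span the same
  space.  It is the squared Hilbert--Schmidt norm of (I - P) Q.\<close>
definition misalign :: "(nat \<Rightarrow> 'h::real_inner) \<Rightarrow> (nat \<Rightarrow> 'h) \<Rightarrow> nat \<Rightarrow> real" where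
  "misalign e f r = real r - (\<Sum>i=1..r. \<Sum>j=1..r. (e i \<bullet> f j)\<^sup>2)"

lemma misalign_sym: "misalign e f r = misalign f e r"
  unfolding misalign_def by (subst sum.swap) (simp add: inner_commute)

lemma misalign_residual:
  assumes "ON e {1..r}" "ON f {1..r}"
  shows "(\<Sum>i=1..r. (norm (e i - proj_op f r (e i)))\<^sup>2) = misalign e f r"
proof -
  have "(norm (e i - proj_op f r (e i)))\<^sup>2 = 1 - (\<Sum>j=1..r. (e i \<bullet> f j)\<^sup>2)" if "i \<in> {1..r}" for i
    using ON_pyth[OF assms(2), of "e i"] ON_norm[OF assms(1) that]
    by (simp add: proj_op_def inner_commute)
  thus ?thesis unfolding misalign_def by (simp add: sum_subtractf)
qed

lemma misalign_nonneg:
  assumes "ON e {1..r}" "ON f {1..r}"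
  shows "misalign e f r \<ge> 0"
  unfolding misalign_residual[OF assms, symmetric] by (simp add: sum_nonneg)

text \<open>The two halves of P - Q = P (I - Q) - (I - P) Q are each bounded by sqrt s.\<close>
lemma proj_of_residual_bound:
  assumes "ON e {1..r}" "ON f {1..r}"
  shows "norm (proj_op e r (h - proj_op f r h)) \<le> sqrt (misalign e f r) * norm h"
proof -
  have "proj_op e r (h - proj_op f r h) = (\<Sum>i=1..r. ((e i - proj_op f r (e i)) \<bullet> h) *\<^sub>R e i)"
    unfolding proj_op_def[of e] by (simp add: inner_diff_right inner_diff_left proj_op_sym)
  hence "(norm (proj_op e r (h - proj_op f r h)))\<^sup>2 = (\<Sum>i=1..r. ((e i - proj_op f r (e i)) \<bullet> h)\<^sup>2)"
    using ON_norm_sum[OF assms(1)] by simp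
  also have "\<dots> \<le> (\<Sum>i=1..r. (norm (e i - proj_op f r (e i)))\<^sup>2 * (norm h)\<^sup>2)"
  proof (rule sum_mono)
    fix i
    let ?u = "e i - proj_op f r (e i)"
    have "\<bar>?u \<bullet> h\<bar>\<^sup>2 \<le> (norm ?u * norm h)\<^sup>2"
      by (rule power_mono[OF Cauchy_Schwarz_ineq2]) simp
    thus "(?u \<bullet> h)\<^sup>2 \<le> (norm ?u)\<^sup>2 * (norm h)\<^sup>2" by (simp add: power_mult_distrib)
  qed
  also have "\<dots> = misalign e f r * (norm h)\<^sup>2"
    unfolding sum_distrib_right[symmetric] misalign_residual[OF assms] ..
  finally have "norm (proj_op e r (h - proj_op f r h)) \<le> sqrt (misalign e f r * (norm h)\<^sup>2)"
    by (rule real_le_rsqrt)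
  thus ?thesis by (simp add: real_sqrt_mult)
qed

lemma residual_of_proj_bound:
  assumes "ON e {1..r}" "ON f {1..r}"
  shows "norm (proj_op f r h - proj_op e r (proj_op f r h)) \<le> sqrt (misalign e f r) * norm h"
proof -
  have res: "(\<Sum>j=1..r. (norm (f j - proj_op e r (f j)))\<^sup>2) = misalign e f r"
    using misalign_residual[OF assms(2,1)] misalign_sym by metis
  have "proj_op f r h - proj_op e r (proj_op f r h) = (\<Sum>j=1..r. (f j \<bullet> h) *\<^sub>R (f j - proj_op e r (f j)))"
    unfolding proj_op_def[of f] linear_sum[OF proj_op_linear] linear_scale[OF proj_op_linear]
    by (simp add: scaleR_diff_right sum_subtractf)
  hence "norm (proj_op f r h - proj_op e r (proj_op f r h))
      \<le> (\<Sum>j=1..r. \<bar>f j \<bullet> h\<bar> * norm (f j - proj_op e r (f j)))"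
    by (metis (no_types, lifting) norm_scaleR norm_sum sum.cong)
  also have "\<dots> \<le> sqrt (\<Sum>j=1..r. \<bar>f j \<bullet> h\<bar>\<^sup>2) * sqrt (\<Sum>j=1..r. (norm (f j - proj_op e r (f j)))\<^sup>2)"
    by (rule sum_mult_le_sqrt)
  also have "\<dots> \<le> norm h * sqrt (misalign e f r)"
  proof (rule mult_mono)
    show "sqrt (\<Sum>j=1..r. \<bar>f j \<bullet> h\<bar>\<^sup>2) \<le> norm h"
      using ON_bessel[OF assms(2), of h] by (simp add: real_le_lsqrt)
    show "sqrt (\<Sum>j=1..r. (norm (f j - proj_op e r (f j)))\<^sup>2) \<le> sqrt (misalign e f r)"
      unfolding res ..
  qed (simp_all add: sum_nonneg)
  finally show ?thesis by (simp add: mult.commute)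
qed

text \<open>Operator-norm bound from a pointwise bound; unlike the library's onorm_le it needs no
  perfect_space assumption on the (possibly trivial) space.\<close>
lemma onorm_le_any:
  assumes "\<And>h. norm (f h) \<le> C * norm h" "C \<ge> 0"
  shows "onorm f \<le> C"
  unfolding onorm_def
proof (rule cSUP_least)
  fix h show "norm (f h) / norm h \<le> C"
    using assms by (cases "h = 0") (simp_all add: divide_le_eq)
qed simp

lemma onorm_proj_diff:
  assumes "ON e {1..r}" "ON f {1..r}"
  shows "onorm (\<lambda>h. proj_op e r h - proj_op f r h) \<le> 2 * sqrt (misalign e f r)"
proof (rule onorm_le_any)
  fix h
  let ?P = "proj_op e r" and ?Q = "proj_op f r"
  have "?P h - ?Q h = ?P (h - ?Q h) - (?Q h - ?P (?Q h))"
    by (simp add: linear_diff[OF proj_op_linear])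
  hence "norm (?P h - ?Q h) \<le> norm (?P (h - ?Q h)) + norm (?Q h - ?P (?Q h))"
    by (metis norm_triangle_ineq4)
  thus "norm (?P h - ?Q h) \<le> 2 * sqrt (misalign e f r) * norm h"
    using proj_of_residual_bound[OF assms, of h] residual_of_proj_bound[OF assms, of h] by simp
qed (simp add: misalign_nonneg[OF assms])

text \<open>The key identity is  sum_i <Q e_i, E e_i> = sum_j <P f_j, E f_j>.\<close>
lemma trace_diff_bound:
  assumes e: "ON e {1..r}" and f: "ON f {1..r}"
    and symE: "\<And>u v. u \<bullet> E v = v \<bullet> E u"
    and eps: "\<epsilon> \<ge> 0" "(\<Sum>i=1..r. (norm (E (e i)))\<^sup>2) \<le> \<epsilon>\<^sup>2" "(\<Sum>j=1..r. (norm (E (f j)))\<^sup>2) \<le> \<epsilon>\<^sup>2"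
  shows "(\<Sum>i=1..r. e i \<bullet> E (e i)) - (\<Sum>j=1..r. f j \<bullet> E (f j)) \<le> 2 * \<epsilon> * sqrt (misalign e f r)"
proof -
  let ?P = "proj_op e r" and ?Q = "proj_op f r" and ?s = "misalign e f r"
  have cross: "(\<Sum>i=1..r. ?Q (e i) \<bullet> E (e i)) = (\<Sum>j=1..r. ?P (f j) \<bullet> E (f j))"
  proof -
    have "(\<Sum>i=1..r. ?Q (e i) \<bullet> E (e i)) = (\<Sum>i=1..r. \<Sum>j=1..r. (e i \<bullet> f j) * (e i \<bullet> E (f j)))"
      unfolding proj_op_def inner_sum_left inner_scaleR_left
      by (intro sum.cong refl) (metis symE inner_commute)
    also have "\<dots> = (\<Sum>j=1..r. ?P (f j) \<bullet> E (f j))"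
      unfolding proj_op_def inner_sum_left inner_scaleR_left by (rule sum.swap)
    finally show ?thesis .
  qed
  have "(\<Sum>i=1..r. e i \<bullet> E (e i)) - (\<Sum>j=1..r. f j \<bullet> E (f j))
      = (\<Sum>i=1..r. (e i - ?Q (e i)) \<bullet> E (e i)) + (\<Sum>j=1..r. (?P (f j) - f j) \<bullet> E (f j))"
    using cross by (simp add: inner_diff_left sum_subtractf)
  also have "\<dots> \<le> sqrt ?s * \<epsilon> + sqrt ?s * \<epsilon>"
  proof (rule add_mono)
    have "sqrt (\<Sum>i=1..r. (norm (E (e i)))\<^sup>2) \<le> \<epsilon>"
      using eps by (simp add: real_le_lsqrt)
    hence "sqrt ?s * sqrt (\<Sum>i=1..r. (norm (E (e i)))\<^sup>2) \<le> sqrt ?s * \<epsilon>"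
      by (rule mult_left_mono) (simp add: misalign_nonneg[OF e f])
    thus "(\<Sum>i=1..r. (e i - ?Q (e i)) \<bullet> E (e i)) \<le> sqrt ?s * \<epsilon>"
      using sum_inner_le_sqrt[of "\<lambda>i. e i - ?Q (e i)" "\<lambda>i. E (e i)" "{1..r}"]
      unfolding misalign_residual[OF e f] by linarith
  next
    have "(\<Sum>j=1..r. (norm (?P (f j) - f j))\<^sup>2) = (\<Sum>j=1..r. (norm (f j - ?P (f j)))\<^sup>2)"
      by (simp add: norm_minus_commute)
    also have "\<dots> = ?s" unfolding misalign_residual[OF f e] by (rule misalign_sym)
    finally have res: "(\<Sum>j=1..r. (norm (?P (f j) - f j))\<^sup>2) = ?s" .
    have "sqrt (\<Sum>j=1..r. (norm (E (f j)))\<^sup>2) \<le> \<epsilon>"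
      using eps by (simp add: real_le_lsqrt)
    hence "sqrt ?s * sqrt (\<Sum>j=1..r. (norm (E (f j)))\<^sup>2) \<le> sqrt ?s * \<epsilon>"
      by (rule mult_left_mono) (simp add: misalign_nonneg[OF e f])
    thus "(\<Sum>j=1..r. (?P (f j) - f j) \<bullet> E (f j)) \<le> sqrt ?s * \<epsilon>"
      using sum_inner_le_sqrt[of "\<lambda>j. ?P (f j) - f j" "\<lambda>j. E (f j)" "{1..r}"]
      unfolding res by linarith
  qed
  finally show ?thesis by simp
qed

section \<open>Trace inequalities for operators given by spectral quadratic forms\<close>

lemma sum_split_at:
  fixes g :: "nat \<Rightarrow> 'a::comm_monoid_add"
  assumes "r \<le> n"
  shows "(\<Sum>i=1..n. g i) = (\<Sum>i=1..r. g i) + (\<Sum>i=r+1..n. g i)"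
  using sum.ub_add_nat[of 1 r g "n - r"] assms by simp

lemma weighted_sum_le_top_sum:
  fixes \<mu> d :: "nat \<Rightarrow> real"
  assumes "1 \<le> r" "r \<le> m" and d: "\<forall>k\<in>{1..m}. 0 \<le> d k \<and> d k \<le> 1" "(\<Sum>k=1..m. d k) \<le> real r"
    and mono: "antimono_on {1..m} \<mu>" and "\<mu> r \<ge> 0"
  shows "(\<Sum>k=1..m. \<mu> k * d k) \<le> (\<Sum>k=1..r. \<mu> k)"
proof -
  have head: "(\<Sum>k=1..r. \<mu> k * d k) \<le> (\<Sum>k=1..r. \<mu> k) - \<mu> r * (real r - (\<Sum>k=1..r. d k))"
  proof -
    have "(\<Sum>k=1..r. \<mu> r * (1 - d k)) \<le> (\<Sum>k=1..r. \<mu> k * (1 - d k))"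
      using d(1) assms(1,2) by (intro sum_mono mult_right_mono monotone_onD[OF mono]) auto
    moreover have "(\<Sum>k=1..r. \<mu> r * (1 - d k)) = \<mu> r * (real r - (\<Sum>k=1..r. d k))"
      by (simp add: sum_distrib_left[symmetric] sum_subtractf)
    moreover have "(\<Sum>k=1..r. \<mu> k * (1 - d k)) = (\<Sum>k=1..r. \<mu> k) - (\<Sum>k=1..r. \<mu> k * d k)"
      by (simp add: sum_subtractf right_diff_distrib)
    ultimately show ?thesis by linarith
  qed
  have tail: "(\<Sum>k=r+1..m. \<mu> k * d k) \<le> \<mu> r * (\<Sum>k=r+1..m. d k)"
    unfolding sum_distrib_left
    using d(1) assms(1,2) by (intro sum_mono mult_right_mono monotone_onD[OF mono]) auto
  have "0 \<le> \<mu> r * (real r - (\<Sum>k=1..r. d k) - (\<Sum>k=r+1..m. d k))"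
    using d(2) sum_split_at[OF assms(2), of d] \<open>\<mu> r \<ge> 0\<close> by simp
  thus ?thesis
    using head tail sum_split_at[OF assms(2), of "\<lambda>k. \<mu> k * d k"] by (simp add: algebra_simps)
qed

lemma ky_fan_trace_bound:
  assumes e: "ON e {1..r}" and f: "ON f I" and I: "I \<subseteq> {1..m}" and r: "1 \<le> r" "r \<le> m"
    and mono: "antimono_on {1..m} \<mu>" and "\<mu> r \<ge> 0"
    and quad: "\<And>h. h \<bullet> B h = (\<Sum>k\<in>I. \<mu> k * (f k \<bullet> h)\<^sup>2)"
  shows "(\<Sum>i=1..r. e i \<bullet> B (e i)) \<le> (\<Sum>j=1..r. \<mu> j)"
proof -
  have finI: "finite I" using I finite_subset by blast
  define d where "d k = (if k \<in> I then \<Sum>i=1..r. (f k \<bullet> e i)\<^sup>2 else 0)" for k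
  have restrict: "(\<Sum>k=1..m. g k * d k) = (\<Sum>k\<in>I. g k * (\<Sum>i=1..r. (f k \<bullet> e i)\<^sup>2))" for g
  proof -
    have "(\<Sum>k=1..m. g k * d k) = (\<Sum>k=1..m. if k \<in> I then g k * (\<Sum>i=1..r. (f k \<bullet> e i)\<^sup>2) else 0)"
      by (intro sum.cong refl) (simp add: d_def)
    also have "\<dots> = (\<Sum>k\<in>{1..m} \<inter> I. g k * (\<Sum>i=1..r. (f k \<bullet> e i)\<^sup>2))"
      by (rule sum.inter_restrict[symmetric]) simp
    finally have "(\<Sum>k=1..m. g k * d k) = (\<Sum>k\<in>{1..m} \<inter> I. g k * (\<Sum>i=1..r. (f k \<bullet> e i)\<^sup>2))" .
    thus ?thesis using I by (simp add: Int_absorb1)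
  qed
  have "(\<Sum>i=1..r. e i \<bullet> B (e i)) = (\<Sum>k\<in>I. \<mu> k * (\<Sum>i=1..r. (f k \<bullet> e i)\<^sup>2))"
    unfolding quad sum_distrib_left by (rule sum.swap)
  also have "\<dots> = (\<Sum>k=1..m. \<mu> k * d k)" by (rule restrict[symmetric])
  also have "\<dots> \<le> (\<Sum>j=1..r. \<mu> j)"
  proof (rule weighted_sum_le_top_sum[OF r _ _ mono \<open>\<mu> r \<ge> 0\<close>])
    show "\<forall>k\<in>{1..m}. 0 \<le> d k \<and> d k \<le> 1"
    proof
      fix k
      have "(\<Sum>i=1..r. (f k \<bullet> e i)\<^sup>2) \<le> (norm (f k))\<^sup>2"
        using ON_bessel[OF e, of "f k"] by (simp add: inner_commute)
      thus "0 \<le> d k \<and> d k \<le> 1" using ON_norm[OF f] by (auto simp: d_def sum_nonneg)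
    qed
    have "(\<Sum>k=1..m. d k) = (\<Sum>i=1..r. \<Sum>k\<in>I. (f k \<bullet> e i)\<^sup>2)"
      using restrict[of "\<lambda>_. 1"] by (simp add: sum.swap[of _ I])
    also have "\<dots> \<le> (\<Sum>i=1..r. (norm (e i))\<^sup>2)"
      by (intro sum_mono ON_bessel[OF f finI])
    also have "\<dots> = real r" using ON_norm[OF e] by simp
    finally show "(\<Sum>k=1..m. d k) \<le> real r" .
  qed
  finally show ?thesis .
qed

lemma trace_gap_bound:
  assumes e: "ON e {1..n}" and f: "ON f {1..r}" and "r < n"
    and mono: "antimono_on {1..n} \<alpha>" and "\<alpha> (r+1) \<ge> 0"
    and quad: "\<And>h. h \<bullet> A h = (\<Sum>k=1..n. \<alpha> k * (e k \<bullet> h)\<^sup>2)"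
  shows "(\<Sum>j=1..r. f j \<bullet> A (f j)) \<le> (\<Sum>i=1..r. \<alpha> i) - (\<alpha> r - \<alpha> (r+1)) * misalign e f r"
proof -
  let ?c = "\<lambda>i j. (e i \<bullet> f j)\<^sup>2" and ?s = "misalign e f r"
  have er: "ON e {1..r}" using ON_subset[OF e] \<open>r < n\<close> by simp
  have row: "(\<Sum>j=1..r. ?c i j) \<le> 1" if "i \<in> {1..r}" for i
    using ON_bessel[OF f, of "e i"] ON_norm[OF er that] by (simp add: inner_commute)
  have head: "(\<Sum>j=1..r. \<Sum>i=1..r. \<alpha> i * ?c i j) \<le> (\<Sum>i=1..r. \<alpha> i) - \<alpha> r * ?s"
  proof -
    have "(\<Sum>i=1..r. \<alpha> r * (1 - (\<Sum>j=1..r. ?c i j))) \<le> (\<Sum>i=1..r. \<alpha> i * (1 - (\<Sum>j=1..r. ?c i j)))"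
      using row \<open>r < n\<close> by (intro sum_mono mult_right_mono monotone_onD[OF mono]) auto
    moreover have "(\<Sum>j=1..r. \<Sum>i=1..r. \<alpha> i * ?c i j) = (\<Sum>i=1..r. \<alpha> i * (\<Sum>j=1..r. ?c i j))"
      unfolding sum_distrib_left by (rule sum.swap)
    moreover have "(\<Sum>i=1..r. \<alpha> r * (1 - (\<Sum>j=1..r. ?c i j))) = \<alpha> r * ?s"
      unfolding misalign_def by (simp add: sum_distrib_left[symmetric] sum_subtractf)
    moreover have "(\<Sum>i=1..r. \<alpha> i * (1 - (\<Sum>j=1..r. ?c i j)))
        = (\<Sum>i=1..r. \<alpha> i) - (\<Sum>i=1..r. \<alpha> i * (\<Sum>j=1..r. ?c i j))"
      by (simp add: sum_subtractf right_diff_distrib)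
    ultimately show ?thesis by linarith
  qed
  have tail: "(\<Sum>i=r+1..n. \<alpha> i * ?c i j) \<le> \<alpha> (r+1) * (1 - (\<Sum>i=1..r. ?c i j))"
    if j: "j \<in> {1..r}" for j
  proof -
    have "(\<Sum>i=1..n. ?c i j) \<le> 1" using ON_bessel[OF e, of "f j"] ON_norm[OF f j] by simp
    hence "(\<Sum>i=r+1..n. ?c i j) \<le> 1 - (\<Sum>i=1..r. ?c i j)"
      using sum_split_at[of r n "\<lambda>i. ?c i j"] \<open>r < n\<close> by simp
    moreover have "(\<Sum>i=r+1..n. \<alpha> i * ?c i j) \<le> \<alpha> (r+1) * (\<Sum>i=r+1..n. ?c i j)"
      unfolding sum_distrib_left by (intro sum_mono mult_right_mono monotone_onD[OF mono]) auto
    ultimately show ?thesis by (meson \<open>\<alpha> (r+1) \<ge> 0\<close> mult_left_mono order_trans)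
  qed
  have "(\<Sum>j=1..r. f j \<bullet> A (f j))
      = (\<Sum>j=1..r. \<Sum>i=1..r. \<alpha> i * ?c i j) + (\<Sum>j=1..r. \<Sum>i=r+1..n. \<alpha> i * ?c i j)"
    unfolding quad sum.distrib[symmetric] using \<open>r < n\<close>
    by (intro sum.cong refl, subst sum_split_at[of r n]) (simp_all add: inner_commute)
  also have "(\<Sum>j=1..r. \<Sum>i=r+1..n. \<alpha> i * ?c i j) \<le> (\<Sum>j=1..r. \<alpha> (r+1) * (1 - (\<Sum>i=1..r. ?c i j)))"
    by (intro sum_mono tail)
  also have "(\<Sum>j=1..r. \<alpha> (r+1) * (1 - (\<Sum>i=1..r. ?c i j))) = \<alpha> (r+1) * ?s"
    using sum.swap[of ?c "{1..r}" "{1..r}"] unfolding misalign_def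
    by (simp add: sum_subtractf sum_distrib_left[symmetric])
  finally show ?thesis using head by (simp add: left_diff_distrib)
qed


lemma top_projection_perturbation:
  assumes e: "ON e {1..n}" and f: "ON f I" and I: "{1..r} \<subseteq> I" "I \<subseteq> {1..m}"
    and r: "1 \<le> r" "r < n" "r \<le> m"
    and \<alpha>: "antimono_on {1..n} \<alpha>" "\<alpha> (r+1) \<ge> 0" and \<mu>: "antimono_on {1..m} \<mu>" "\<mu> r \<ge> 0"
    and quadA: "\<And>h. h \<bullet> A h = (\<Sum>k=1..n. \<alpha> k * (e k \<bullet> h)\<^sup>2)"
    and quadB: "\<And>h. h \<bullet> B h = (\<Sum>k\<in>I. \<mu> k * (f k \<bullet> h)\<^sup>2)"
    and symA: "\<And>u v. u \<bullet> A v = v \<bullet> A u" and symB: "\<And>u v. u \<bullet> B v = v \<bullet> B u"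
    and gap: "\<alpha> r - \<alpha> (r+1) > 0"
    and eps: "\<epsilon> \<ge> 0" "(\<Sum>i=1..r. (norm (A (e i) - B (e i)))\<^sup>2) \<le> \<epsilon>\<^sup>2"
      "(\<Sum>j=1..r. (norm (A (f j) - B (f j)))\<^sup>2) \<le> \<epsilon>\<^sup>2"
  shows "onorm (\<lambda>h. proj_op e r h - proj_op f r h) \<le> 4 * \<epsilon> / (\<alpha> r - \<alpha> (r+1))"
proof -
  define \<Delta> where "\<Delta> = \<alpha> r - \<alpha> (r+1)"
  define s where "s = misalign e f r"
  define E where "E h = A h - B h" for h
  have er: "ON e {1..r}" using ON_subset[OF e] r by simp
  have fr: "ON f {1..r}" using ON_subset[OF f I(1)] .
  have finI: "finite I" using I(2) finite_subset by blast
  have trA: "(\<Sum>i=1..r. e i \<bullet> A (e i)) = (\<Sum>i=1..r. \<alpha> i)"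
    using ON_rayleigh[OF e finite_atLeastAtMost _ quadA] r by simp
  have trB: "(\<Sum>j=1..r. f j \<bullet> B (f j)) = (\<Sum>j=1..r. \<mu> j)"
    using ON_rayleigh[OF f finI _ quadB] I(1) by (intro sum.cong) auto
  have "\<Delta> * s \<le> (\<Sum>i=1..r. e i \<bullet> E (e i)) - (\<Sum>j=1..r. f j \<bullet> E (f j))"
    using trA trB ky_fan_trace_bound[OF er f I(2) r(1,3) \<mu> quadB]
      trace_gap_bound[OF e fr r(2) \<alpha> quadA]
    unfolding \<Delta>_def s_def E_def inner_diff_right sum_subtractf by linarith
  also have "\<dots> \<le> 2 * \<epsilon> * sqrt s"
    unfolding s_def by (rule trace_diff_bound[OF er fr])
      (use eps in \<open>simp_all add: E_def inner_diff_right symA symB\<close>)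
  finally have quad_ineq: "\<Delta> * s \<le> 2 * \<epsilon> * sqrt s" .
  have "s \<ge> 0" unfolding s_def by (rule misalign_nonneg[OF er fr])
  have "\<Delta> * sqrt s \<le> 2 * \<epsilon>"
  proof (cases "s = 0")
    case False
    with \<open>s \<ge> 0\<close> have "sqrt s > 0" by simp
    have "(\<Delta> * sqrt s) * sqrt s \<le> (2 * \<epsilon>) * sqrt s"
      using quad_ineq \<open>s \<ge> 0\<close> by (simp add: mult.assoc)
    thus ?thesis using \<open>sqrt s > 0\<close> by (rule mult_right_le_imp_le)
  qed (use eps(1) in simp)
  hence "2 * sqrt s \<le> 4 * \<epsilon> / \<Delta>"
    using gap unfolding \<Delta>_def by (simp add: le_divide_eq mult.commute)
  thus ?thesis
    using onorm_proj_diff[OF er fr] unfolding s_def \<Delta>_def by linarith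
qed


section \<open>Eigenfunctions of the empirical operators\<close>

text \<open>A square real matrix with orthonormal columns has orthonormal rows.  The row Gram
  matrix S has Frobenius norm and trace both equal to n, so ||S - I||_F^2 = 0.\<close>
lemma row_gram_frobenius:
  fixes W :: "nat \<Rightarrow> nat \<Rightarrow> real"
  assumes col: "\<And>k l. k \<in> I \<Longrightarrow> l \<in> I \<Longrightarrow> (\<Sum>i\<in>I. W i k * W i l) = (if k = l then 1 else 0)"
    and "finite I"
  shows "(\<Sum>i\<in>I. \<Sum>j\<in>I. (\<Sum>k\<in>I. W i k * W j k)\<^sup>2) = real (card I)"
proof -
  have "(\<Sum>i\<in>I. \<Sum>j\<in>I. (\<Sum>k\<in>I. W i k * W j k)\<^sup>2)
      = (\<Sum>i\<in>I. \<Sum>j\<in>I. \<Sum>k\<in>I. \<Sum>l\<in>I. (W i k * W i l) * (W j k * W j l))"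
    unfolding power2_eq_square sum_product by (simp add: mult_ac)
  also have "\<dots> = (\<Sum>k\<in>I. \<Sum>l\<in>I. \<Sum>i\<in>I. \<Sum>j\<in>I. (W i k * W i l) * (W j k * W j l))"
    by (subst (2) sum.swap, subst sum.swap, subst (2) sum.swap, subst (3) sum.swap) (rule refl)
  also have "\<dots> = (\<Sum>k\<in>I. \<Sum>l\<in>I. (\<Sum>i\<in>I. W i k * W i l) * (\<Sum>j\<in>I. W j k * W j l))"
    by (simp add: sum_product)
  also have "\<dots> = (\<Sum>k\<in>I. \<Sum>l\<in>I. if k = l then 1 else 0)"
    using col by (intro sum.cong refl) simp
  also have "\<dots> = real (card I)" using \<open>finite I\<close> by simp
  finally show ?thesis .
qed

lemma orthonormal_rows:
  fixes W :: "nat \<Rightarrow> nat \<Rightarrow> real"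
  assumes col: "\<And>k l. k \<in> I \<Longrightarrow> l \<in> I \<Longrightarrow> (\<Sum>i\<in>I. W i k * W i l) = (if k = l then 1 else 0)"
    and "finite I" and ij: "i \<in> I" "j \<in> I"
  shows "(\<Sum>k\<in>I. W i k * W j k) = (if i = j then 1 else 0)"
proof -
  define S where "S i j = (\<Sum>k\<in>I. W i k * W j k)" for i j
  define D where "D i j = (if i = j then 1 else (0::real))" for i j :: nat
  have trace: "(\<Sum>i\<in>I. \<Sum>j\<in>I. S i j * D i j) = real (card I)"
  proof -
    have "(\<Sum>i\<in>I. \<Sum>j\<in>I. S i j * D i j) = (\<Sum>i\<in>I. S i i)"
      unfolding D_def using \<open>finite I\<close> by (simp add: if_distrib cong: if_cong)
    also have "\<dots> = (\<Sum>k\<in>I. \<Sum>i\<in>I. W i k * W i k)"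
      unfolding S_def by (rule sum.swap)
    also have "\<dots> = real (card I)" using col by simp
    finally show ?thesis .
  qed
  have "(\<Sum>i\<in>I. \<Sum>j\<in>I. (S i j - D i j)\<^sup>2)
      = (\<Sum>i\<in>I. \<Sum>j\<in>I. (S i j)\<^sup>2) - 2 * (\<Sum>i\<in>I. \<Sum>j\<in>I. S i j * D i j) + (\<Sum>i\<in>I. \<Sum>j\<in>I. (D i j)\<^sup>2)"
    by (simp add: power2_diff sum_subtractf sum.distrib sum_distrib_left mult.assoc)
  also have "\<dots> = 0"
  proof -
    have "(D i j)\<^sup>2 = D i j" for i j by (simp add: D_def)
    hence "(\<Sum>i\<in>I. \<Sum>j\<in>I. (D i j)\<^sup>2) = real (card I)"
      using \<open>finite I\<close> by (simp add: D_def)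
    thus ?thesis using row_gram_frobenius[OF col \<open>finite I\<close>] trace unfolding S_def by simp
  qed
  finally have "(\<Sum>i\<in>I. \<Sum>j\<in>I. (S i j - D i j)\<^sup>2) = 0" .
  hence "\<forall>i\<in>I. (\<Sum>j\<in>I. (S i j - D i j)\<^sup>2) = 0"
    using \<open>finite I\<close> by (subst (asm) sum_nonneg_eq_0_iff) (auto intro: sum_nonneg)
  hence "(S i j - D i j)\<^sup>2 = 0" using ij \<open>finite I\<close> by (simp add: sum_nonneg_eq_0_iff)
  thus ?thesis unfolding S_def D_def by simp
qed

definition eigvec :: "('x \<Rightarrow> 'h::real_inner) \<Rightarrow> nat \<Rightarrow> (nat \<Rightarrow> 'x) \<Rightarrow> (nat \<Rightarrow> nat \<Rightarrow> real) \<Rightarrow> nat \<Rightarrow> 'h" where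
  "eigvec Phi n p W k = (\<Sum>i=1..n. W i k *\<^sub>R Phi (p i))"

context
  fixes Phi :: "'x \<Rightarrow> 'h::real_inner" and n :: nat and p :: "nat \<Rightarrow> 'x"
    and lam :: "nat \<Rightarrow> real" and W :: "nat \<Rightarrow> nat \<Rightarrow> real"
  assumes ed: "eigen_decomp n (\<lambda>i j. Phi (p i) \<bullet> Phi (p j)) lam W"
begin

lemma ed_col: "j \<in> {1..n} \<Longrightarrow> l \<in> {1..n} \<Longrightarrow> (\<Sum>i=1..n. W i j * W i l) = (if j = l then 1 else 0)"
  using ed unfolding eigen_decomp_def by blast

lemma ed_eig: "j \<in> {1..n} \<Longrightarrow> i \<in> {1..n} \<Longrightarrow> (\<Sum>k=1..n. (Phi (p i) \<bullet> Phi (p k)) * W k j) = lam j * W i j"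
  using ed unfolding eigen_decomp_def by blast

lemma ed_rows: "i \<in> {1..n} \<Longrightarrow> j \<in> {1..n} \<Longrightarrow> (\<Sum>k=1..n. W i k * W j k) = (if i = j then 1 else 0)"
  using orthonormal_rows[of "{1..n}" W i j] ed_col by blast

lemma ed_antimono: "antimono_on {1..n} (\<lambda>k. lam k / c)" if "c \<ge> 0"
  using ed that unfolding eigen_decomp_def by (intro monotone_onI) (auto intro: divide_right_mono)

lemma ed_pos_prefix: "r \<le> n \<Longrightarrow> lam r > 0 \<Longrightarrow> {1..r} \<subseteq> {k\<in>{1..n}. lam k > 0}"
  using ed unfolding eigen_decomp_def by (auto intro: less_le_trans)

lemma ed_all_pos: "lam n > 0 \<Longrightarrow> {k\<in>{1..n}. lam k > 0} = {1..n}"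
  using ed_pos_prefix[of n] by auto

lemma eigvec_inner:
  assumes k: "k \<in> {1..n}" and l: "l \<in> {1..n}"
  shows "eigvec Phi n p W k \<bullet> eigvec Phi n p W l = (if k = l then lam k else 0)"
proof -
  have "eigvec Phi n p W k \<bullet> eigvec Phi n p W l = (\<Sum>i=1..n. W i k * (\<Sum>j=1..n. (Phi (p i) \<bullet> Phi (p j)) * W j l))"
    unfolding eigvec_def inner_sum_left by (simp add: inner_sum_right sum_distrib_left mult_ac)
  also have "\<dots> = lam l * (\<Sum>i=1..n. W i k * W i l)"
    using ed_eig[OF l] by (simp add: sum_distrib_left mult_ac)
  also have "\<dots> = (if k = l then lam k else 0)" using ed_col[OF k l] by simp
  finally show ?thesis .
qed

lemma lam_nonneg: "k \<in> {1..n} \<Longrightarrow> lam k \<ge> 0"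
  using eigvec_inner[of k k] by (metis inner_ge_zero)

lemma eigvec_eq:
  assumes k: "k \<in> {1..n}"
  shows "eigvec Phi n p W k = sqrt (lam k) *\<^sub>R eigfun Phi n p lam W k"
proof (cases "lam k = 0")
  case True
  hence "eigvec Phi n p W k \<bullet> eigvec Phi n p W k = 0" using eigvec_inner[OF k k] by simp
  thus ?thesis using True by simp
next
  case False
  hence "sqrt (lam k) > 0" using lam_nonneg[OF k] by simp
  thus ?thesis unfolding eigfun_def eigvec_def[symmetric] by simp
qed

lemma eigfun_ON: "ON (eigfun Phi n p lam W) {k\<in>{1..n}. lam k > 0}"
  unfolding ON_def
proof (intro ballI)
  fix k l assume k: "k \<in> {k\<in>{1..n}. lam k > 0}" and l: "l \<in> {k\<in>{1..n}. lam k > 0}"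
  have "eigfun Phi n p lam W k \<bullet> eigfun Phi n p lam W l
      = (eigvec Phi n p W k \<bullet> eigvec Phi n p W l) / (sqrt (lam k) * sqrt (lam l))"
    unfolding eigfun_def eigvec_def[symmetric] by simp
  thus "eigfun Phi n p lam W k \<bullet> eigfun Phi n p lam W l = (if k = l then 1 else 0)"
    using eigvec_inner[of k l] k l by (simp add: real_sqrt_mult[symmetric] del: real_sqrt_mult)
qed

text \<open>Inverting the orthogonal matrix W: every feature vector lies in the eigenfunction span.\<close>
lemma Phi_in_eigfun_span:
  assumes l: "l \<in> {1..n}"
  shows "Phi (p l) \<in> span (eigfun Phi n p lam W ` {1..n})"
proof -
  have "(\<Sum>k=1..n. W l k *\<^sub>R eigvec Phi n p W k) = (\<Sum>i=1..n. (\<Sum>k=1..n. W l k * W i k) *\<^sub>R Phi (p i))"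
    unfolding eigvec_def scaleR_sum_right by (simp add: scaleR_sum_left, rule sum.swap)
  also have "\<dots> = (\<Sum>i=1..n. if l = i then Phi (p i) else 0)"
    using ed_rows[OF l] by (intro sum.cong refl) simp
  also have "\<dots> = Phi (p l)" using l by simp
  finally have "Phi (p l) = (\<Sum>k=1..n. (W l k * sqrt (lam k)) *\<^sub>R eigfun Phi n p lam W k)"
    by (simp add: eigvec_eq)
  thus ?thesis by (metis (no_types, lifting) span_base span_scale span_sum image_eqI)
qed

lemma emp_op_quad:
  "h \<bullet> emp_op Phi n p h = (\<Sum>k\<in>{k\<in>{1..n}. lam k > 0}. lam k / real n * (eigfun Phi n p lam W k \<bullet> h)\<^sup>2)"
proof -
  have "(\<Sum>k=1..n. (eigvec Phi n p W k \<bullet> h)\<^sup>2)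
      = (\<Sum>k=1..n. \<Sum>i=1..n. \<Sum>j=1..n. (W i k * W j k) * ((Phi (p i) \<bullet> h) * (Phi (p j) \<bullet> h)))"
    unfolding eigvec_def inner_sum_left power2_eq_square sum_product by (simp add: mult_ac)
  also have "\<dots> = (\<Sum>i=1..n. \<Sum>j=1..n. \<Sum>k=1..n. (W i k * W j k) * ((Phi (p i) \<bullet> h) * (Phi (p j) \<bullet> h)))"
    by (subst sum.swap) (rule sum.cong[OF refl], rule sum.swap)
  also have "\<dots> = (\<Sum>i=1..n. \<Sum>j=1..n. (\<Sum>k=1..n. W i k * W j k) * ((Phi (p i) \<bullet> h) * (Phi (p j) \<bullet> h)))"
    by (simp add: sum_distrib_right)
  also have "\<dots> = (\<Sum>i=1..n. \<Sum>j=1..n. if i = j then (Phi (p i) \<bullet> h) * (Phi (p j) \<bullet> h) else 0)"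
    using ed_rows by (intro sum.cong refl) simp
  also have "\<dots> = (\<Sum>i=1..n. (Phi (p i) \<bullet> h)\<^sup>2)" by (simp add: power2_eq_square)
  finally have sq: "(\<Sum>i=1..n. (Phi (p i) \<bullet> h)\<^sup>2) = (\<Sum>k=1..n. lam k * (eigfun Phi n p lam W k \<bullet> h)\<^sup>2)"
    using lam_nonneg by (simp add: eigvec_eq power_mult_distrib)
  have "h \<bullet> emp_op Phi n p h = (1 / real n) * (\<Sum>i=1..n. (Phi (p i) \<bullet> h)\<^sup>2)"
    unfolding emp_op_def by (simp add: inner_sum_right power2_eq_square inner_commute)
  also have "\<dots> = (\<Sum>k=1..n. lam k / real n * (eigfun Phi n p lam W k \<bullet> h)\<^sup>2)"
    unfolding sq by (simp add: sum_distrib_left)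
  also have "\<dots> = (\<Sum>k\<in>{k\<in>{1..n}. lam k > 0}. lam k / real n * (eigfun Phi n p lam W k \<bullet> h)\<^sup>2)"
  proof (rule sum.mono_neutral_right)
    show "\<forall>k\<in>{1..n} - {k\<in>{1..n}. lam k > 0}. lam k / real n * (eigfun Phi n p lam W k \<bullet> h)\<^sup>2 = 0"
    proof
      fix k assume "k \<in> {1..n} - {k\<in>{1..n}. lam k > 0}"
      hence "lam k = 0" using lam_nonneg[of k] by auto
      thus "lam k / real n * (eigfun Phi n p lam W k \<bullet> h)\<^sup>2 = 0" by simp
    qed
  qed auto
  finally show ?thesis .
qed

end

lemma emp_op_sym: "u \<bullet> emp_op Phi n p h = h \<bullet> emp_op Phi n p u"
  unfolding emp_op_def by (simp add: inner_sum_right mult_ac inner_commute)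

lemma emp_op_in_span:
  assumes "\<And>i. i \<in> {1..n} \<Longrightarrow> Phi (p i) \<in> span S"
  shows "emp_op Phi n p h \<in> span S"
  unfolding emp_op_def using assms by (intro span_scale span_sum) auto

lemma hs_norm_nonneg: "hs_norm e n E \<ge> 0"
  unfolding hs_norm_def by (simp add: sum_nonneg)

lemma hs_norm_dominates:
  assumes e: "ON e {1..n}" and span: "\<And>h. E h \<in> span (e ` {1..n})"
    and sym: "\<And>u v. u \<bullet> E v = v \<bullet> E u" and f: "ON f J" "finite J"
  shows "(\<Sum>j\<in>J. (norm (E (f j)))\<^sup>2) \<le> (hs_norm e n E)\<^sup>2"
proof -
  have pars: "(norm (E h))\<^sup>2 = (\<Sum>k=1..n. (e k \<bullet> E h)\<^sup>2)" for h
    using ON_parseval[OF e _ span] by simp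
  have "(\<Sum>j\<in>J. (norm (E (f j)))\<^sup>2) = (\<Sum>k=1..n. \<Sum>j\<in>J. (f j \<bullet> E (e k))\<^sup>2)"
    unfolding pars by (subst sum.swap) (simp add: sym)
  also have "\<dots> \<le> (\<Sum>k=1..n. (norm (E (e k)))\<^sup>2)"
    by (intro sum_mono ON_bessel[OF f])
  also have "\<dots> = (hs_norm e n E)\<^sup>2"
    unfolding hs_norm_def pars by (simp add: sum_nonneg, rule sum.swap)
  finally show ?thesis .
qed


text \<open>E = L_N - L_m maps into the span of the eigenfunctions of L_N (the sample points are
  among the x_i), so ||E||_HS bounds its Hilbert--Schmidt sum on any orthonormal family.\<close>
lemma empirical_diff_hs_bound:
  assumes edA: "eigen_decomp N (\<lambda>i j. Phi (x i) \<bullet> Phi (x j)) lam V" and "lam N > 0"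
    and sample: "\<forall>i\<in>{1..m}. xh i \<in> x ` {1..N}" and f: "ON f J" "finite J"
  shows "(\<Sum>j\<in>J. (norm (emp_op Phi N x (f j) - emp_op Phi m xh (f j)))\<^sup>2)
      \<le> (hs_norm (eigfun Phi N x lam V) N (\<lambda>h. emp_op Phi N x h - emp_op Phi m xh h))\<^sup>2"
proof (rule hs_norm_dominates[OF _ _ _ f])
  show "ON (eigfun Phi N x lam V) {1..N}"
    using eigfun_ON[of N Phi x lam V, OF edA] ed_all_pos[of N Phi x lam V, OF edA \<open>lam N > 0\<close>] by simp
  have feature_span: "Phi (x i) \<in> span (eigfun Phi N x lam V ` {1..N})" if "i \<in> {1..N}" for i
    by (rule Phi_in_eigfun_span[of N Phi x lam V, OF edA that])
  show "emp_op Phi N x h - emp_op Phi m xh h \<in> span (eigfun Phi N x lam V ` {1..N})" for h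
    by (intro span_diff emp_op_in_span) (use sample feature_span in fastforce)+
  show "u \<bullet> (emp_op Phi N x v - emp_op Phi m xh v) = v \<bullet> (emp_op Phi N x u - emp_op Phi m xh u)" for u v
    unfolding inner_diff_right by (simp add: emp_op_sym[of u _ _ _ v])
qed

lemma empirical_projection_perturbation:
  assumes edA: "eigen_decomp N (\<lambda>i j. Phi (x i) \<bullet> Phi (x j)) lam V" and lamN: "lam N > 0"
    and edB: "eigen_decomp m (\<lambda>i j. Phi (xh i) \<bullet> Phi (xh j)) lamh U" and lamh_r: "lamh r > 0"
    and sample: "\<forall>i\<in>{1..m}. xh i \<in> x ` {1..N}"
    and r: "1 \<le> r" "r < N" "r \<le> m" and gap: "lam r > lam (r + 1)"
  shows "onorm (\<lambda>h. proj_op (eigfun Phi N x lam V) r h - proj_op (eigfun Phi m xh lamh U) r h)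
    \<le> 4 * hs_norm (eigfun Phi N x lam V) N (\<lambda>h. emp_op Phi N x h - emp_op Phi m xh h)
        / ((lam r - lam (r + 1)) / real N)"
proof -
  define Ip where "Ip = {k\<in>{1..m}. lamh k > 0}"
  note posA = ed_all_pos[of N Phi x lam V, OF edA lamN]
  have top_Ip: "{1..r} \<subseteq> Ip"
    unfolding Ip_def by (rule ed_pos_prefix[of m Phi xh lamh U, OF edB r(3) lamh_r])
  have gap_split: "(lam r - lam (r + 1)) / real N = lam r / real N - lam (r + 1) / real N"
    by (simp add: diff_divide_distrib)
  show ?thesis
    unfolding gap_split
  proof (rule top_projection_perturbation[OF _ _ top_Ip _ r, where A = "emp_op Phi N x"
        and B = "emp_op Phi m xh" and \<alpha> = "\<lambda>k. lam k / real N" and \<mu> = "\<lambda>k. lamh k / real m"])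
    show "ON (eigfun Phi N x lam V) {1..N}" using eigfun_ON[of N Phi x lam V, OF edA] posA by simp
    show "ON (eigfun Phi m xh lamh U) Ip" using eigfun_ON[of m Phi xh lamh U, OF edB] by (simp add: Ip_def)
    show "Ip \<subseteq> {1..m}" unfolding Ip_def by auto
    show "antimono_on {1..N} (\<lambda>k. lam k / real N)" "antimono_on {1..m} (\<lambda>k. lamh k / real m)"
      by (rule ed_antimono[of N Phi x lam V, OF edA], simp, rule ed_antimono[of m Phi xh lamh U, OF edB], simp)
    have "r + 1 \<in> {k\<in>{1..N}. lam k > 0}" unfolding posA using r by simp
    thus "lam (r + 1) / real N \<ge> 0" "lamh r / real m \<ge> 0" using lamh_r by auto
    show "h \<bullet> emp_op Phi N x h = (\<Sum>k=1..N. lam k / real N * (eigfun Phi N x lam V k \<bullet> h)\<^sup>2)"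
      "h \<bullet> emp_op Phi m xh h = (\<Sum>k\<in>Ip. lamh k / real m * (eigfun Phi m xh lamh U k \<bullet> h)\<^sup>2)" for h
      using emp_op_quad[of N Phi x lam V, OF edA, of h] emp_op_quad[of m Phi xh lamh U, OF edB, of h]
      unfolding posA Ip_def by simp_all
    show "u \<bullet> emp_op Phi N x v = v \<bullet> emp_op Phi N x u" "u \<bullet> emp_op Phi m xh v = v \<bullet> emp_op Phi m xh u"
      for u v by (rule emp_op_sym)+
    show "lam r / real N - lam (r + 1) / real N > 0"
      using gap r(2) unfolding gap_split[symmetric] by simp
    show "hs_norm (eigfun Phi N x lam V) N (\<lambda>h. emp_op Phi N x h - emp_op Phi m xh h) \<ge> 0"
      by (rule hs_norm_nonneg)
    show "(\<Sum>i=1..r. (norm (emp_op Phi N x (eigfun Phi N x lam V i) - emp_op Phi m xh (eigfun Phi N x lam V i)))\<^sup>2)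
        \<le> (hs_norm (eigfun Phi N x lam V) N (\<lambda>h. emp_op Phi N x h - emp_op Phi m xh h))\<^sup>2"
      using eigfun_ON[of N Phi x lam V, OF edA] posA r(2)
      by (intro empirical_diff_hs_bound[OF edA lamN sample]) (auto elim: ON_subset)
    show "(\<Sum>j=1..r. (norm (emp_op Phi N x (eigfun Phi m xh lamh U j) - emp_op Phi m xh (eigfun Phi m xh lamh U j)))\<^sup>2)
        \<le> (hs_norm (eigfun Phi N x lam V) N (\<lambda>h. emp_op Phi N x h - emp_op Phi m xh h))\<^sup>2"
      using eigfun_ON[of m Phi xh lamh U, OF edB] top_Ip
      by (intro empirical_diff_hs_bound[OF edA lamN sample]) (auto simp: Ip_def elim: ON_subset)
  qed
qed

lemma gap_fraction_bounds:
  fixes \<epsilon> \<Delta> :: real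
  assumes "\<epsilon> \<ge> 0" "\<Delta> > 3 * \<epsilon>"
  shows "4 * \<epsilon> / \<Delta> \<le> 4 * \<epsilon> / (\<Delta> - \<epsilon>)" "4 * \<epsilon> / (\<Delta> - \<epsilon>) \<le> 6 * \<epsilon> / \<Delta>"
proof -
  show "4 * \<epsilon> / \<Delta> \<le> 4 * \<epsilon> / (\<Delta> - \<epsilon>)"
    using assms by (intro divide_left_mono) auto
  have "4 * \<epsilon> * \<Delta> \<le> 6 * \<epsilon> * (\<Delta> - \<epsilon>)"
    using mult_nonneg_nonneg[of "2 * \<epsilon>" "\<Delta> - 3 * \<epsilon>"] assms by (simp add: algebra_simps)
  thus "4 * \<epsilon> / (\<Delta> - \<epsilon>) \<le> 6 * \<epsilon> / \<Delta>"
    using assms by (simp add: field_simps)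
qed

theorem theorem5:
  fixes \<kappa> :: "'x \<Rightarrow> 'x \<Rightarrow> real"
    and Phi :: "'x \<Rightarrow> 'h::{real_inner, complete_space}"
    and N m r :: nat
    and x xh :: "nat \<Rightarrow> 'x"
    and lam lamh :: "nat \<Rightarrow> real"
    and V U :: "nat \<Rightarrow> nat \<Rightarrow> real"
  assumes kernel: "\<forall>a b. \<kappa> a b = Phi a \<bullet> Phi b"
    and dense: "closure (span (range Phi)) = UNIV"
    and diag_le1: "\<forall>a. \<kappa> a a \<le> 1"
    and K_pd: "\<forall>c. (\<exists>i\<in>{1..N}. c i \<noteq> 0) \<longrightarrow> (\<Sum>i=1..N. \<Sum>j=1..N. c i * c j * \<kappa> (x i) (x j)) > 0"
    and K_eig: "eigen_decomp N (\<lambda>i j. \<kappa> (x i) (x j)) lam V"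
    and lamN_pos: "lam N > 0"
    and sample: "\<forall>i\<in>{1..m}. xh i \<in> x ` {1..N}"
    and Kh_eig: "eigen_decomp m (\<lambda>i j. \<kappa> (xh i) (xh j)) lamh U"
    and r_ge1: "1 \<le> r" and r_lt_N: "r < N" and r_le_m: "r \<le> m"
    and lamh_r_pos: "lamh r > 0"
    and gap: "(lam r - lam (r + 1)) / real N
                > 3 * hs_norm (eigfun Phi N x lam V) N
                        (\<lambda>h. emp_op Phi N x h - emp_op Phi m xh h)"
  shows "onorm (\<lambda>h. proj_op (eigfun Phi N x lam V) r h - proj_op (eigfun Phi m xh lamh U) r h)
           \<le> 4 * hs_norm (eigfun Phi N x lam V) N (\<lambda>h. emp_op Phi N x h - emp_op Phi m xh h)
             / ((lam r - lam (r + 1)) / real N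
                - hs_norm (eigfun Phi N x lam V) N (\<lambda>h. emp_op Phi N x h - emp_op Phi m xh h))
       \<and> 4 * hs_norm (eigfun Phi N x lam V) N (\<lambda>h. emp_op Phi N x h - emp_op Phi m xh h)
             / ((lam r - lam (r + 1)) / real N
                - hs_norm (eigfun Phi N x lam V) N (\<lambda>h. emp_op Phi N x h - emp_op Phi m xh h))
         \<le> 6 * hs_norm (eigfun Phi N x lam V) N (\<lambda>h. emp_op Phi N x h - emp_op Phi m xh h)
             / ((lam r - lam (r + 1)) / real N)"
proof -
  have edA: "eigen_decomp N (\<lambda>i j. Phi (x i) \<bullet> Phi (x j)) lam V" using K_eig kernel by simp
  have edB: "eigen_decomp m (\<lambda>i j. Phi (xh i) \<bullet> Phi (xh j)) lamh U" using Kh_eig kernel by simp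
  define \<epsilon> where "\<epsilon> = hs_norm (eigfun Phi N x lam V) N (\<lambda>h. emp_op Phi N x h - emp_op Phi m xh h)"
  define \<Delta> where "\<Delta> = (lam r - lam (r + 1)) / real N"
  have "\<epsilon> \<ge> 0" unfolding \<epsilon>_def by (rule hs_norm_nonneg)
  have "\<Delta> > 3 * \<epsilon>" using gap unfolding \<epsilon>_def \<Delta>_def .
  hence "(lam r - lam (r + 1)) / real N > 0" using \<open>\<epsilon> \<ge> 0\<close> unfolding \<Delta>_def by linarith
  hence "lam r > lam (r + 1)" using r_lt_N by (simp add: zero_less_divide_iff)
  hence "onorm (\<lambda>h. proj_op (eigfun Phi N x lam V) r h - proj_op (eigfun Phi m xh lamh U) r h)
      \<le> 4 * \<epsilon> / \<Delta>"
    unfolding \<epsilon>_def \<Delta>_def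
    by (rule empirical_projection_perturbation[OF edA lamN_pos edB lamh_r_pos sample r_ge1 r_lt_N r_le_m])
  with gap_fraction_bounds[OF \<open>\<epsilon> \<ge> 0\<close> \<open>\<Delta> > 3 * \<epsilon>\<close>]
  show ?thesis unfolding \<epsilon>_def[symmetric] \<Delta>_def[symmetric] by (blast intro: order_trans)
qed

end
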